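(* Let $F$ be a Banach lattice and $(f_n)\subset\mathrm{S}_F$ a quasi-disjoint sequence. Then $\overline{\mathrm{span}}\{f_n\}_{n\in\mathbb{N}}$ is anti-dispersed.
   Context: $\mathrm{S}_X$ is the unit sphere. Elements $x,y$ are disjoint if $|x|\wedge|y|=0$. $(f_n)\subset\mathrm{S}_F$ is quasi-disjoint if there is a disjoint sequence $(e_n)\subset\mathrm{S}_F$ with $\sum_n\|f_n-e_n\|<1$. A subspace $E$ is dispersed if it contains no almost disjoint sequence, i.e. no $(e_n)\subset\mathrm{S}_E$ for which there is a disjoint $(g_n)\subset F$ with $\|g_n-e_n\|\to0$. A closed subspace is anti-dispersed if it contains no infinite-dimensional closed dispersed subspace. *)

theory Defs
  imports "HOL-Analysis.Analysis"
begin

definition lat_abs :: "'a::{lattice, uminus} \<Rightarrow> 'a" where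
  "lat_abs x = sup x (- x)"

class banach_lattice = banach + ordered_real_vector + lattice +
  assumes lattice_norm: "sup x (- x) \<le> sup y (- y) \<Longrightarrow> norm x \<le> norm y"

definition lat_disjoint :: "'a::banach_lattice \<Rightarrow> 'a \<Rightarrow> bool" where
  "lat_disjoint x y \<longleftrightarrow> inf (lat_abs x) (lat_abs y) = 0"

definition unit_sphere :: "'a::real_normed_vector set" where
  "unit_sphere = {x. norm x = 1}"

definition disjoint_seq :: "(nat \<Rightarrow> 'a::banach_lattice) \<Rightarrow> bool" where
  "disjoint_seq g \<longleftrightarrow> (\<forall>i j. i \<noteq> j \<longrightarrow> lat_disjoint (g i) (g j))"

definition quasi_disjoint :: "(nat \<Rightarrow> 'a::banach_lattice) \<Rightarrow> bool" where
  "quasi_disjoint f \<longleftrightarrow> range f \<subseteq> unit_sphere \<and>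
     (\<exists>e. range e \<subseteq> unit_sphere \<and> disjoint_seq e \<and>
          summable (\<lambda>n. norm (f n - e n)) \<and> (\<Sum>n. norm (f n - e n)) < 1)"

definition almost_disjoint_in :: "'a::banach_lattice set \<Rightarrow> (nat \<Rightarrow> 'a) \<Rightarrow> bool" where
  "almost_disjoint_in E e \<longleftrightarrow> range e \<subseteq> unit_sphere \<inter> E \<and>
     (\<exists>g. disjoint_seq g \<and> (\<lambda>n. norm (g n - e n)) \<longlonglongrightarrow> 0)"

definition dispersed :: "'a::banach_lattice set \<Rightarrow> bool" where
  "dispersed E \<longleftrightarrow> \<not> (\<exists>e. almost_disjoint_in E e)"

definition infinite_dimensional :: "'a::real_vector set \<Rightarrow> bool" where
  "infinite_dimensional X \<longleftrightarrow> \<not> (\<exists>B. finite B \<and> span B = X)"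

definition anti_dispersed :: "'a::banach_lattice set \<Rightarrow> bool" where
  "anti_dispersed E \<longleftrightarrow> subspace E \<and> closed E \<and>
     \<not> (\<exists>X. X \<subseteq> E \<and> subspace X \<and> closed X \<and> infinite_dimensional X \<and> dispersed X)"

end

theory Submission
  imports Defs
begin

text \<open>Let \<open>e\<close> be a disjoint sequence with \<open>\<delta> = (\<Sum>n. norm (f n - e n)) < 1\<close>.
  In a Banach lattice \<open>norm x \<le> norm (x + y)\<close> for disjoint \<open>x\<close> and \<open>y\<close>, so every
  coefficient satisfies \<open>\<bar>c k\<bar> \<le> norm (\<Sum>i\<in>J. c i *\<^sub>R e i)\<close> and hence
  \<open>\<bar>c k\<bar> * (1 - \<delta>) \<le> norm (\<Sum>i\<in>J. c i *\<^sub>R f i)\<close>. Consequently, if \<open>J \<subseteq> {N..}\<close>, the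
  block \<open>\<Sum>i\<in>J. c i *\<^sub>R f i\<close> is close to the disjointly supported block
  \<open>\<Sum>i\<in>J. c i *\<^sub>R e i\<close>, up to its norm times the tail \<open>\<Sum>i\<ge>N. norm (f i - e i)\<close>
  divided by \<open>1 - \<delta>\<close>.

  The closed span of the \<open>f n\<close> lies in \<open>span (f ` {..<N}) + closure (span (f ` {N..}))\<close>,
  a closed subspace plus a finite-dimensional one, so an infinite-dimensional subspace \<open>X\<close>
  of it meets the tail space \<open>closure (span (f ` {N..}))\<close> in a unit vector. That vector is
  close to a finite block of the \<open>e i\<close> with \<open>i \<ge> N\<close>; choosing the \<open>N\<close> so that these
  blocks have pairwise disjoint supports gives an almost disjoint sequence in \<open>X\<close>.\<close>

lemma lat_abs_ge_self: "x \<le> lat_abs (x::'a::banach_lattice)"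
  by (simp add: lat_abs_def)

lemma lat_abs_ge_minus: "- x \<le> lat_abs (x::'a::banach_lattice)"
  by (simp add: lat_abs_def)

lemma lat_abs_le_iff: "lat_abs (x::'a::banach_lattice) \<le> y \<longleftrightarrow> x \<le> y \<and> - x \<le> y"
  by (simp add: lat_abs_def)

lemma lat_abs_nonneg: "0 \<le> lat_abs (x::'a::banach_lattice)"
proof -
  have "0 \<le> lat_abs x + lat_abs x"
    using add_mono[OF lat_abs_ge_self lat_abs_ge_minus, of x x] by simp
  then have "0 \<le> (1/2::real) *\<^sub>R (lat_abs x + lat_abs x)"
    by (intro scaleR_nonneg_nonneg) auto
  also have "\<dots> = lat_abs x"
    by (simp flip: scaleR_2)
  finally show ?thesis .
qed

lemma lat_abs_triangle: "lat_abs (x + y) \<le> lat_abs x + lat_abs (y::'a::banach_lattice)"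
  unfolding lat_abs_le_iff minus_add_distrib
  by (intro conjI add_mono lat_abs_ge_self lat_abs_ge_minus)

lemma lat_abs_scaleR_le: "lat_abs (c *\<^sub>R x) \<le> \<bar>c\<bar> *\<^sub>R lat_abs (x::'a::banach_lattice)"
proof (cases "c \<ge> 0")
  case True
  then show ?thesis
    using scaleR_left_mono[OF lat_abs_ge_self True, of x] scaleR_left_mono[OF lat_abs_ge_minus True, of x]
    by (simp add: lat_abs_le_iff)
next
  case False
  then have "-c \<ge> 0" by simp
  then show ?thesis
    using False scaleR_left_mono[OF lat_abs_ge_self \<open>-c \<ge> 0\<close>, of x]
      scaleR_left_mono[OF lat_abs_ge_minus \<open>-c \<ge> 0\<close>, of x]
    by (simp add: lat_abs_le_iff)
qed

lemma lat_abs_sum_le: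
  "lat_abs (\<Sum>i\<in>J. c i *\<^sub>R x i) \<le> (\<Sum>i\<in>J. \<bar>c i\<bar> *\<^sub>R lat_abs (x i :: 'a::banach_lattice))"
proof (induction J rule: infinite_finite_induct)
  case (insert j J)
  have "lat_abs (c j *\<^sub>R x j + (\<Sum>i\<in>J. c i *\<^sub>R x i))
      \<le> lat_abs (c j *\<^sub>R x j) + lat_abs (\<Sum>i\<in>J. c i *\<^sub>R x i)"
    by (rule lat_abs_triangle)
  also have "\<dots> \<le> \<bar>c j\<bar> *\<^sub>R lat_abs (x j) + (\<Sum>i\<in>J. \<bar>c i\<bar> *\<^sub>R lat_abs (x i))"
    by (rule add_mono[OF lat_abs_scaleR_le insert.IH])
  finally show ?case using insert by simp
qed (simp_all add: lat_abs_def)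

lemma inf_add_le:
  fixes a b c :: "'a::banach_lattice"
  assumes "0 \<le> a" "0 \<le> b" "0 \<le> c"
  shows "inf a (b + c) \<le> inf a b + inf a c"
proof -
  let ?m = "inf a (b + c)"
  have "?m - inf a b \<le> a"
    using assms(2) by (metis add_increasing2 diff_le_eq inf.cobounded1 le_inf_iff assms(1))
  moreover have "?m - inf a b \<le> c"
  proof -
    have "?m - c \<le> a" using assms(3) by (metis add_increasing2 diff_le_eq inf.cobounded1)
    moreover have "?m - c \<le> b" by (simp add: diff_le_eq)
    ultimately show ?thesis by (metis diff_le_eq le_inf_iff add.commute)
  qed
  ultimately have "?m - inf a b \<le> inf a c" by simp
  thus ?thesis by (metis diff_le_eq add.commute)
qed

lemma inf_scaleR_le:
  fixes a b :: "'a::banach_lattice"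
  assumes "0 < k"
  shows "inf (k *\<^sub>R a) (k *\<^sub>R b) \<le> k *\<^sub>R inf a b"
proof -
  have "(1/k) *\<^sub>R inf (k *\<^sub>R a) (k *\<^sub>R b) \<le> inf a b"
    using assms scaleR_left_mono[of "inf (k *\<^sub>R a) (k *\<^sub>R b)" "k *\<^sub>R a" "1/k"]
      scaleR_left_mono[of "inf (k *\<^sub>R a) (k *\<^sub>R b)" "k *\<^sub>R b" "1/k"] by simp
  from scaleR_left_mono[OF this, of k] assms show ?thesis by simp
qed

lemma inf_scaleR_eq_0:
  fixes a b :: "'a::banach_lattice"
  assumes "0 \<le> a" "0 \<le> b" "inf a b = 0" "0 \<le> k"
  shows "inf a (k *\<^sub>R b) = 0"
proof (rule antisym)
  define k' where "k' = max 1 k"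
  have "inf a (k *\<^sub>R b) \<le> inf (k' *\<^sub>R a) (k' *\<^sub>R b)"
    using assms scaleR_right_mono[of 1 k' a] scaleR_right_mono[of k k' b]
    unfolding k'_def by (intro inf_mono) auto
  also have "\<dots> \<le> 0"
    using inf_scaleR_le[of k' a b] assms(3) unfolding k'_def by simp
  finally show "inf a (k *\<^sub>R b) \<le> 0" .
  show "0 \<le> inf a (k *\<^sub>R b)" using assms by (simp add: scaleR_nonneg_nonneg)
qed

lemma inf_sum_eq_0:
  fixes a :: "'a::banach_lattice"
  assumes "0 \<le> a" "finite J" "\<And>i. i \<in> J \<Longrightarrow> 0 \<le> w i \<and> inf a (w i) = 0"
  shows "inf a (sum w J) = 0"
  using assms(2,3)
proof (induction J rule: finite_induct)
  case (insert j J)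
  have "inf a (w j + sum w J) \<le> inf a (w j) + inf a (sum w J)"
    using insert assms(1) by (intro inf_add_le) (auto intro: sum_nonneg)
  moreover have "0 \<le> inf a (w j + sum w J)"
    using insert assms(1) by (auto intro: add_nonneg_nonneg sum_nonneg)
  ultimately show ?case using insert by simp
qed (use assms(1) in \<open>simp add: inf_absorb2\<close>)

lemma lat_disjoint_commute: "lat_disjoint x y \<longleftrightarrow> lat_disjoint y x"
  by (simp add: lat_disjoint_def inf_commute)

lemma lat_disjoint_sum_right:
  fixes x :: "'b \<Rightarrow> 'a::banach_lattice"
  assumes "finite J" "\<And>i. i \<in> J \<Longrightarrow> lat_disjoint y (x i)"
  shows "lat_disjoint y (\<Sum>i\<in>J. c i *\<^sub>R x i)"
proof -
  have "inf (lat_abs y) (\<Sum>i\<in>J. \<bar>c i\<bar> *\<^sub>R lat_abs (x i)) = 0"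
    using assms lat_abs_nonneg
    by (intro inf_sum_eq_0 conjI scaleR_nonneg_nonneg inf_scaleR_eq_0)
      (auto simp: lat_disjoint_def)
  moreover have "inf (lat_abs y) (lat_abs (\<Sum>i\<in>J. c i *\<^sub>R x i))
      \<le> inf (lat_abs y) (\<Sum>i\<in>J. \<bar>c i\<bar> *\<^sub>R lat_abs (x i))"
    using lat_abs_sum_le by (rule inf_mono[OF order_refl])
  ultimately show ?thesis
    using lat_abs_nonneg unfolding lat_disjoint_def by (metis antisym le_inf_iff)
qed

lemma lat_disjoint_sums:
  fixes x y :: "'b \<Rightarrow> 'a::banach_lattice"
  assumes "finite I" "finite J" "\<And>i j. i \<in> I \<Longrightarrow> j \<in> J \<Longrightarrow> lat_disjoint (x i) (y j)"
  shows "lat_disjoint (\<Sum>i\<in>I. a i *\<^sub>R x i) (\<Sum>j\<in>J. b j *\<^sub>R y j)"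
proof -
  have "lat_disjoint (x i) (\<Sum>j\<in>J. b j *\<^sub>R y j)" if "i \<in> I" for i
    using assms that by (intro lat_disjoint_sum_right) auto
  then have "lat_disjoint (\<Sum>j\<in>J. b j *\<^sub>R y j) (\<Sum>i\<in>I. a i *\<^sub>R x i)"
    using assms by (intro lat_disjoint_sum_right) (auto simp: lat_disjoint_commute)
  then show ?thesis by (simp add: lat_disjoint_commute)
qed

lemma lat_abs_le_lat_abs_add:
  fixes x y :: "'a::banach_lattice"
  assumes "lat_disjoint x y"
  shows "lat_abs x \<le> lat_abs (x + y)"
proof -
  have bound: "inf (lat_abs x) (lat_abs (x + y) + lat_abs y) \<le> lat_abs (x + y)"
  proof -
    have "inf (lat_abs x) (lat_abs (x + y) + lat_abs y)
        \<le> inf (lat_abs x) (lat_abs (x + y)) + inf (lat_abs x) (lat_abs y)"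
      by (rule inf_add_le[OF lat_abs_nonneg lat_abs_nonneg lat_abs_nonneg])
    then show ?thesis using assms by (simp add: lat_disjoint_def le_infI2)
  qed
  have "x \<le> lat_abs (x + y) + lat_abs y" "- x \<le> lat_abs (x + y) + lat_abs y"
    using add_mono[OF lat_abs_ge_self lat_abs_ge_minus, of "x + y" y]
      add_mono[OF lat_abs_ge_minus lat_abs_ge_self, of "x + y" y] by simp_all
  then show ?thesis
    using bound lat_abs_ge_self[of x] lat_abs_ge_minus[of x]
    by (simp add: lat_abs_le_iff) (meson le_inf_iff order_trans)
qed

lemma norm_le_norm_add_if_lat_disjoint:
  fixes x y :: "'a::banach_lattice"
  assumes "lat_disjoint x y"
  shows "norm x \<le> norm (x + y)"
  using lat_abs_le_lat_abs_add[OF assms] by (intro lattice_norm) (simp add: lat_abs_def)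

lemma coefficient_le_norm_if_disjoint_seq:
  fixes e :: "nat \<Rightarrow> 'a::banach_lattice"
  assumes "disjoint_seq e" "finite J" "k \<in> J"
  shows "\<bar>c k\<bar> * norm (e k) \<le> norm (\<Sum>i\<in>J. c i *\<^sub>R e i)"
proof -
  have "lat_disjoint (\<Sum>i\<in>{k}. c i *\<^sub>R e i) (\<Sum>i\<in>J-{k}. c i *\<^sub>R e i)"
    using assms by (intro lat_disjoint_sums) (auto simp: disjoint_seq_def)
  then have "norm (c k *\<^sub>R e k) \<le> norm (c k *\<^sub>R e k + (\<Sum>i\<in>J-{k}. c i *\<^sub>R e i))"
    by (intro norm_le_norm_add_if_lat_disjoint) simp
  also have "\<dots> = norm (\<Sum>i\<in>J. c i *\<^sub>R e i)"
    using assms by (simp add: sum.remove)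
  finally show ?thesis by simp
qed

lemma subspace_closure:
  fixes S :: "'a::real_normed_vector set"
  assumes "subspace S"
  shows "subspace (closure S)"
  unfolding subspace_def
proof (intro conjI ballI allI)
  show "0 \<in> closure S" using assms closure_subset subspace_0 by blast
  fix x y assume "x \<in> closure S" "y \<in> closure S"
  then have "x + y \<in> closure (S + S)" using closure_sum by blast
  moreover have "S + S \<subseteq> S" using assms by (auto elim!: set_plus_elim intro: subspace_add)
  ultimately show "x + y \<in> closure S" using closure_mono by blast
next
  fix c x assume "x \<in> closure S"
  then have "c *\<^sub>R x \<in> closure ((*\<^sub>R) c ` S)" by (auto simp flip: closure_scaleR)
  moreover have "(*\<^sub>R) c ` S \<subseteq> S" using assms by (auto intro: subspace_scale)
  ultimately show "c *\<^sub>R x \<in> closure S" using closure_mono by blast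
qed

lemma subspace_set_plus:
  assumes "subspace S" "subspace T"
  shows "subspace (S + T)"
proof -
  have "S + T = {x + y |x y. x \<in> S \<and> y \<in> T}" by (auto simp: set_plus_def)
  then show ?thesis using subspace_sums[OF assms] by simp
qed

lemma abs_mult_infdist_le_norm:
  fixes T :: "'a::real_normed_vector set"
  assumes "subspace T" "t \<in> T"
  shows "\<bar>c\<bar> * infdist a T \<le> norm (c *\<^sub>R a + t)"
proof (cases "c = 0")
  case False
  have "\<bar>c\<bar> * infdist a T \<le> \<bar>c\<bar> * dist a (- (1 / c) *\<^sub>R t)"
    using assms by (intro mult_left_mono infdist_le subspace_scale) auto
  also have "\<dots> = norm (c *\<^sub>R (a + (1 / c) *\<^sub>R t))"
    by (simp add: dist_norm)
  also have "\<dots> = norm (c *\<^sub>R a + t)"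
    using False by (simp add: scaleR_add_right)
  finally show ?thesis .
qed simp

lemma closed_span_singleton_plus_if_coefficient_bound:
  fixes T :: "'a::real_normed_vector set"
  assumes "subspace T" "closed T" "\<epsilon> > 0"
    and coeff: "\<And>c t. t \<in> T \<Longrightarrow> \<bar>c\<bar> * \<epsilon> \<le> norm (c *\<^sub>R a + t)"
  shows "closed (span {a} + T)"
  unfolding closed_sequential_limits
proof (intro allI impI, elim conjE)
  fix s l assume s: "\<forall>n. s n \<in> span {a} + T" and lim: "s \<longlonglongrightarrow> l"
  obtain c t where st: "\<And>n. s n = c n *\<^sub>R a + t n \<and> t n \<in> T"
    using s unfolding set_plus_def span_singleton by simp metis
  have "Cauchy c"
    unfolding Cauchy_iff
  proof (intro allI impI)
    fix r :: real assume "r > 0"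
    then obtain M where M: "\<forall>m\<ge>M. \<forall>n\<ge>M. norm (s m - s n) < r * \<epsilon>"
      using LIMSEQ_imp_Cauchy[OF lim] \<open>\<epsilon> > 0\<close> unfolding Cauchy_iff by (meson mult_pos_pos)
    have "\<bar>c m - c n\<bar> * \<epsilon> < r * \<epsilon>" if "m \<ge> M" "n \<ge> M" for m n
    proof -
      have "s m - s n = (c m - c n) *\<^sub>R a + (t m - t n)"
        using st[of m] st[of n] by (simp add: algebra_simps)
      moreover have "t m - t n \<in> T"
        using st[of m] st[of n] subspace_diff[OF assms(1)] by blast
      ultimately have "\<bar>c m - c n\<bar> * \<epsilon> \<le> norm (s m - s n)"
        using coeff by presburger
      also have "\<dots> < r * \<epsilon>" using M that by blast
      finally show ?thesis .
    qed
    then show "\<exists>M. \<forall>m\<ge>M. \<forall>n\<ge>M. norm (c m - c n) < r"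
      using \<open>\<epsilon> > 0\<close> by auto
  qed
  then obtain c0 where "c \<longlonglongrightarrow> c0" using Cauchy_convergent_iff convergent_def by blast
  then have "(\<lambda>n. s n - c n *\<^sub>R a) \<longlonglongrightarrow> l - c0 *\<^sub>R a"
    by (intro tendsto_intros lim)
  then have "t \<longlonglongrightarrow> l - c0 *\<^sub>R a"
    using st by simp
  then have "l - c0 *\<^sub>R a \<in> T"
    by (rule closed_sequentially[OF assms(2), rotated]) (use st in blast)
  then show "l \<in> span {a} + T"
    using set_plus_intro[of "c0 *\<^sub>R a" "span {a}" "l - c0 *\<^sub>R a" T]
    by (simp add: span_base span_scale)
qed

lemma closed_span_singleton_plus:
  fixes T :: "'a::real_normed_vector set"
  assumes "subspace T" "closed T"
  shows "closed (span {a} + T)"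
proof (cases "a \<in> T")
  case True
  have "span {a} + T \<subseteq> T"
    using True assms(1) span_minimal[of "{a}" T] by (auto elim!: set_plus_elim intro: subspace_add)
  moreover have "T \<subseteq> span {a} + T"
    using set_plus_intro[of 0 "span {a}" _ T] span_zero by fastforce
  ultimately show ?thesis using assms(2) by (simp add: subset_antisym)
next
  case False
  then have "infdist a T > 0"
    using assms subspace_0 by (intro infdist_pos_not_in_closed) auto
  then show ?thesis
    using assms abs_mult_infdist_le_norm
    by (intro closed_span_singleton_plus_if_coefficient_bound) auto
qed

lemma closed_span_finite_plus:
  fixes T :: "'a::real_normed_vector set"
  assumes "finite F" "subspace T" "closed T"
  shows "closed (span F + T)"
  using assms
proof (induction F arbitrary: T rule: finite_induct)
  case empty
  then show ?case by (simp add: set_zero_plus2)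
next
  case (insert a F)
  have "span (insert a F) = span {a} + span F"
    using span_Un[of "{a}" F] unfolding set_plus_def by auto
  then have "span (insert a F) + T = span F + (span {a} + T)"
    by (simp add: ac_simps)
  then show ?case
    using insert by (simp add: closed_span_singleton_plus subspace_set_plus)
qed

lemma nontrivial_relation_if_card_gt:
  assumes "finite B" "finite F" "card F < card B" "p ` B \<subseteq> span F"
  obtains u where "\<exists>b\<in>B. u b \<noteq> 0" "(\<Sum>b\<in>B. u b *\<^sub>R p b) = 0"
proof (cases "inj_on p B")
  case True
  then have "card (p ` B) > card F" using assms(3) by (simp add: card_image)
  then have "dependent (p ` B)"
    using independent_span_bound[OF assms(2) _ assms(4)] by auto
  then obtain w where "\<exists>v\<in>p ` B. w v \<noteq> 0" "(\<Sum>v\<in>p ` B. w v *\<^sub>R v) = 0"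
    using assms(1) by (auto simp: dependent_finite)
  then show ?thesis
    using that[of "w \<circ> p"] True by (simp add: sum.reindex)
next
  case False
  then obtain b1 b2 where b: "b1 \<in> B" "b2 \<in> B" "b1 \<noteq> b2" "p b1 = p b2"
    unfolding inj_on_def by blast
  define u where "u b = (if b = b1 then 1 else if b = b2 then -1 else (0::real))" for b
  have "(\<Sum>b\<in>B. u b *\<^sub>R p b) = (\<Sum>b\<in>{b1, b2}. u b *\<^sub>R p b)"
    using b assms(1) by (intro sum.mono_neutral_right) (auto simp: u_def)
  also have "\<dots> = 0" using b by (simp add: u_def)
  finally have "(\<Sum>b\<in>B. u b *\<^sub>R p b) = 0" .
  moreover have "\<exists>b\<in>B. u b \<noteq> 0" using b(1) by (auto simp: u_def)
  ultimately show ?thesis by (rule that[rotated])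
qed

lemma infinite_dimensional_meets_finite_codim:
  assumes "subspace X" "infinite_dimensional X" "subspace T" "finite F" "X \<subseteq> span F + T"
  obtains y where "y \<in> X" "y \<in> T" "y \<noteq> 0"
proof -
  obtain B where B: "B \<subseteq> X" "independent B" "X \<subseteq> span B"
    using maximal_independent_subset by blast
  have "infinite B"
    using B assms(1,2) span_minimal[of B X] unfolding infinite_dimensional_def by blast
  then obtain B' where B': "finite B'" "card B' = Suc (card F)" "B' \<subseteq> B"
    using infinite_arbitrarily_large by blast
  have "\<forall>b\<in>B'. \<exists>v. v \<in> span F \<and> b - v \<in> T"
    using B' B assms(5) by (fastforce elim!: set_plus_elim)
  then obtain p where p: "\<And>b. b \<in> B' \<Longrightarrow> p b \<in> span F \<and> b - p b \<in> T"
    by metis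
  obtain u where u: "\<exists>b\<in>B'. u b \<noteq> 0" "(\<Sum>b\<in>B'. u b *\<^sub>R p b) = 0"
    by (rule nontrivial_relation_if_card_gt[OF B'(1) assms(4), of p]) (use B' p in auto)
  define y where "y = (\<Sum>b\<in>B'. u b *\<^sub>R b)"
  have "y \<in> X"
    unfolding y_def using B' B assms(1) by (auto intro!: subspace_sum subspace_scale)
  moreover have "y = (\<Sum>b\<in>B'. u b *\<^sub>R (b - p b))"
    using u(2) by (simp add: y_def scaleR_diff_right sum_subtractf)
  then have "y \<in> T"
    using p assms(3) by (auto intro!: subspace_sum subspace_scale)
  moreover have "y \<noteq> 0"
    using independent_mono[OF B(2) B'(3)] u(1) dependent_finite[OF B'(1)] unfolding y_def by blast
  ultimately show ?thesis by (rule that)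
qed

lemma in_span_image_obtains_sum:
  assumes "x \<in> span (f ` A)" "inj_on f A"
  obtains J c where "finite J" "J \<subseteq> A" "x = (\<Sum>i\<in>J. c i *\<^sub>R f i)"
proof -
  obtain T r where T: "finite T" "T \<subseteq> f ` A" "x = (\<Sum>v\<in>T. r v *\<^sub>R v)"
    using assms(1) unfolding span_explicit by blast
  obtain J where J: "J \<subseteq> A" "finite J" "T = f ` J"
    using finite_subset_image[OF T(1,2)] by blast
  have "x = (\<Sum>v\<in>f ` J. r v *\<^sub>R v)"
    using T(3) J(3) by blast
  also have "\<dots> = (\<Sum>i\<in>J. r (f i) *\<^sub>R f i)"
    using inj_on_subset[OF assms(2) J(1)] by (rule sum.reindex_cong) auto
  finally have "x = (\<Sum>i\<in>J. r (f i) *\<^sub>R f i)" .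
  then show ?thesis by (rule that[OF J(2,1)])
qed

lemma disjoint_subseq_of_tail_sets:
  fixes J :: "nat \<Rightarrow> nat set"
  assumes "\<And>N. finite (J N)" "\<And>N. J N \<subseteq> {N..}"
  obtains r :: "nat \<Rightarrow> nat" where "strict_mono r" "disjoint_family (J \<circ> r)"
proof -
  define r where "r = rec_nat 0 (\<lambda>_ m. Suc (Max (insert m (J m))))"
  have r_Suc: "r (Suc n) = Suc (Max (insert (r n) (J (r n))))" for n
    by (simp add: r_def)
  have fin: "finite (insert (r n) (J (r n)))" for n
    using assms(1) by simp
  have block: "J (r n) \<subseteq> {r n..<r (Suc n)}" for n
  proof
    fix i assume "i \<in> J (r n)"
    then show "i \<in> {r n..<r (Suc n)}"
      using assms(2)[of "r n"] Max_ge[OF fin[of n], of i] by (auto simp: r_Suc less_Suc_eq_le)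
  qed
  have "strict_mono r"
    unfolding strict_mono_Suc_iff r_Suc using Max_ge[OF fin] by (simp add: le_imp_less_Suc)
  have disj: "J (r m) \<inter> J (r n) = {}" if "m < n" for m n
  proof -
    have "r (Suc m) \<le> r n"
      using that \<open>strict_mono r\<close> by (simp add: strict_mono_less_eq Suc_leI)
    then show ?thesis using block[of m] block[of n] by fastforce
  qed
  have "disjoint_family (J \<circ> r)"
    unfolding disjoint_family_on_def
  proof (intro ballI impI)
    fix m n :: nat assume "m \<noteq> n"
    then consider "m < n" | "n < m" by linarith
    then show "(J \<circ> r) m \<inter> (J \<circ> r) n = {}"
      by cases (use disj in \<open>auto simp: Int_commute\<close>)
  qed
  with \<open>strict_mono r\<close> show ?thesis by (rule that)
qed

locale quasi_disjoint_pair =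
  fixes f e :: "nat \<Rightarrow> 'a::banach_lattice"
  assumes norm_e: "\<And>n. norm (e n) = 1"
    and disjoint_e: "disjoint_seq e"
    and summable_dev: "summable (\<lambda>n. norm (f n - e n))"
    and total_dev_less_1: "(\<Sum>n. norm (f n - e n)) < 1"
begin

definition dev :: "nat \<Rightarrow> real" where
  "dev n = norm (f n - e n)"

definition \<delta> :: real where
  "\<delta> = (\<Sum>n. dev n)"

definition tail :: "nat \<Rightarrow> real" where
  "tail N = \<delta> - (\<Sum>i<N. dev i)"

lemma \<delta>_less_1: "\<delta> < 1"
  using total_dev_less_1 by (simp add: \<delta>_def dev_def)

lemma sum_dev_le_tail:
  assumes "finite J" "J \<subseteq> {N..}"
  shows "sum dev J \<le> tail N"
proof -
  have "sum dev J + (\<Sum>i<N. dev i) = sum dev (J \<union> {..<N})"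
    using assms by (subst sum.union_disjoint) auto
  also have "\<dots> \<le> \<delta>"
    unfolding \<delta>_def using assms summable_dev
    by (intro sum_le_suminf) (auto simp: dev_def[abs_def])
  finally show ?thesis by (simp add: tail_def)
qed

lemma tail_tendsto_0: "tail \<longlonglongrightarrow> 0"
proof -
  have "(\<lambda>N. \<delta> - (\<Sum>i<N. dev i)) \<longlonglongrightarrow> \<delta> - \<delta>"
    unfolding \<delta>_def using summable_dev
    by (intro tendsto_diff tendsto_const summable_LIMSEQ) (simp add: dev_def[abs_def])
  then show ?thesis by (simp add: tail_def[abs_def])
qed

lemma norm_sum_diff_le:
  "norm ((\<Sum>i\<in>J. c i *\<^sub>R f i) - (\<Sum>i\<in>J. c i *\<^sub>R e i)) \<le> (\<Sum>i\<in>J. \<bar>c i\<bar> * dev i)"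
proof -
  have "(\<Sum>i\<in>J. c i *\<^sub>R f i) - (\<Sum>i\<in>J. c i *\<^sub>R e i) = (\<Sum>i\<in>J. c i *\<^sub>R (f i - e i))"
    by (simp add: sum_subtractf scaleR_diff_right)
  also have "norm \<dots> \<le> (\<Sum>i\<in>J. \<bar>c i\<bar> * dev i)"
    using norm_sum[of "\<lambda>i. c i *\<^sub>R (f i - e i)" J] by (simp add: dev_def)
  finally show ?thesis .
qed

text \<open>The largest coefficient of \<open>\<Sum> c i *\<^sub>R e i\<close> bounds its norm from below, and passing
  to \<open>f\<close> loses at most that coefficient times \<open>\<delta>\<close>.\<close>

lemma coefficient_bound:
  assumes "finite J" "k \<in> J"
  shows "\<bar>c k\<bar> * (1 - \<delta>) \<le> norm (\<Sum>i\<in>J. c i *\<^sub>R f i)"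
proof -
  define M where "M = Max ((\<lambda>i. \<bar>c i\<bar>) ` J)"
  have "M \<in> (\<lambda>i. \<bar>c i\<bar>) ` J"
    unfolding M_def using assms by (intro Max_in) auto
  then obtain k0 where k0: "k0 \<in> J" "\<bar>c k0\<bar> = M" by auto
  have le_M: "\<bar>c i\<bar> \<le> M" if "i \<in> J" for i
    unfolding M_def using assms that by simp
  have "M \<le> norm (\<Sum>i\<in>J. c i *\<^sub>R e i)"
    using coefficient_le_norm_if_disjoint_seq[OF disjoint_e assms(1) k0(1), of c] k0(2) norm_e
    by simp
  also have "\<dots> = norm ((\<Sum>i\<in>J. c i *\<^sub>R f i)
      - ((\<Sum>i\<in>J. c i *\<^sub>R f i) - (\<Sum>i\<in>J. c i *\<^sub>R e i)))"
    by simp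
  also have "\<dots> \<le> norm (\<Sum>i\<in>J. c i *\<^sub>R f i)
      + norm ((\<Sum>i\<in>J. c i *\<^sub>R f i) - (\<Sum>i\<in>J. c i *\<^sub>R e i))"
    by (rule norm_triangle_ineq4)
  also have "\<dots> \<le> norm (\<Sum>i\<in>J. c i *\<^sub>R f i) + M * \<delta>"
  proof -
    have "(\<Sum>i\<in>J. \<bar>c i\<bar> * dev i) \<le> (\<Sum>i\<in>J. M * dev i)"
      using le_M by (intro sum_mono mult_right_mono) (auto simp: dev_def)
    also have "\<dots> \<le> M * \<delta>"
      using sum_dev_le_tail[OF assms(1), of 0] le_M[OF assms(2)]
      by (simp add: sum_distrib_left[symmetric] tail_def mult_left_mono)
    finally show ?thesis using norm_sum_diff_le[of c J] by simp
  qed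
  finally have "M * (1 - \<delta>) \<le> norm (\<Sum>i\<in>J. c i *\<^sub>R f i)"
    by (simp add: algebra_simps)
  moreover have "\<bar>c k\<bar> * (1 - \<delta>) \<le> M * (1 - \<delta>)"
    using le_M[OF assms(2)] \<delta>_less_1 by (intro mult_right_mono) auto
  ultimately show ?thesis by linarith
qed

lemma inj_f: "inj f"
proof (rule injI, rule ccontr)
  fix i j assume eq: "f i = f j" and "i \<noteq> j"
  define c where "c k = (if k = i then 1 else if k = j then -1 else (0::real))" for k
  have "(\<Sum>k\<in>{i,j}. c k *\<^sub>R f k) = 0"
    using eq \<open>i \<noteq> j\<close> by (simp add: c_def)
  moreover have "\<bar>c i\<bar> * (1 - \<delta>) \<le> norm (\<Sum>k\<in>{i,j}. c k *\<^sub>R f k)"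
    by (rule coefficient_bound) auto
  ultimately show False
    using \<delta>_less_1 by (simp add: c_def)
qed

lemma norm_sum_diff_le_tail:
  assumes "finite J" "J \<subseteq> {N..}"
  shows "norm ((\<Sum>i\<in>J. c i *\<^sub>R f i) - (\<Sum>i\<in>J. c i *\<^sub>R e i))
    \<le> norm (\<Sum>i\<in>J. c i *\<^sub>R f i) / (1 - \<delta>) * tail N"
proof -
  let ?K = "norm (\<Sum>i\<in>J. c i *\<^sub>R f i) / (1 - \<delta>)"
  have "\<bar>c i\<bar> \<le> ?K" if "i \<in> J" for i
    using coefficient_bound[OF assms(1) that, of c] \<delta>_less_1 by (simp add: pos_le_divide_eq)
  then have "(\<Sum>i\<in>J. \<bar>c i\<bar> * dev i) \<le> (\<Sum>i\<in>J. ?K * dev i)"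
    by (intro sum_mono mult_right_mono) (auto simp: dev_def)
  also have "\<dots> = ?K * sum dev J"
    by (rule sum_distrib_left[symmetric])
  also have "\<dots> \<le> ?K * tail N"
    using sum_dev_le_tail[OF assms] \<delta>_less_1 by (intro mult_left_mono) auto
  finally show ?thesis using norm_sum_diff_le[of c J] by simp
qed

lemma closure_span_subset_head_plus_tail:
  "closure (span (range f)) \<subseteq> span (f ` {..<N}) + closure (span (f ` {N..}))"
proof -
  let ?W = "span (f ` {..<N}) + closure (span (f ` {N..}))"
  have "f j \<in> ?W" for j
  proof (cases "j < N")
    case True
    then have "f j + 0 \<in> ?W"
      by (intro set_plus_intro span_base closure_subset[THEN subsetD] span_zero) auto
    then show ?thesis by simp
  next
    case False
    then have "0 + f j \<in> ?W"
      by (intro set_plus_intro span_zero closure_subset[THEN subsetD] span_base) auto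
    then show ?thesis by simp
  qed
  moreover have "subspace ?W"
    by (intro subspace_set_plus subspace_span subspace_closure)
  moreover have "closed ?W"
    by (intro closed_span_finite_plus subspace_closure subspace_span) auto
  ultimately show ?thesis
    by (intro closure_minimal span_minimal) auto
qed

definition block_error :: "nat \<Rightarrow> real" where
  "block_error N = 1 / (real N + 1) + 2 / (1 - \<delta>) * tail N"

lemma block_error_tendsto_0: "block_error \<longlonglongrightarrow> 0"
proof -
  have "(\<lambda>N. 1 / (real N + 1)) \<longlonglongrightarrow> 0"
    using LIMSEQ_inverse_real_of_nat by (simp add: inverse_eq_divide add.commute)
  then have "block_error \<longlonglongrightarrow> 0 + 2 / (1 - \<delta>) * 0"
    unfolding block_error_def[abs_def] by (intro tendsto_intros tail_tendsto_0)
  then show ?thesis by simp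
qed

lemma unit_vector_near_tail_block:
  assumes "X \<subseteq> closure (span (range f))" "subspace X" "infinite_dimensional X"
  obtains y J a where "y \<in> X" "norm y = 1" "finite J" "J \<subseteq> {N..}"
    "norm (y - (\<Sum>i\<in>J. a i *\<^sub>R e i)) \<le> block_error N"
proof -
  obtain y0 where y0: "y0 \<in> X" "y0 \<in> closure (span (f ` {N..}))" "y0 \<noteq> 0"
    using infinite_dimensional_meets_finite_codim[OF assms(2,3), of "closure (span (f ` {N..}))"
        "f ` {..<N}"] assms(1) closure_span_subset_head_plus_tail[of N]
    by (auto intro: subspace_closure)
  define y where "y = (1 / norm y0) *\<^sub>R y0"
  have y: "y \<in> X" "y \<in> closure (span (f ` {N..}))" "norm y = 1"
    unfolding y_def using y0 assms(2) subspace_closure[OF subspace_span]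
    by (auto intro: subspace_scale)
  obtain z where z: "z \<in> span (f ` {N..})" "dist y z < 1 / (real N + 1)"
    using closure_approachableD[OF y(2), of "1 / (real N + 1)"] by auto
  obtain J a where J: "finite J" "J \<subseteq> {N..}" "z = (\<Sum>i\<in>J. a i *\<^sub>R f i)"
    using in_span_image_obtains_sum[OF z(1)] inj_f by (metis inj_on_subset subset_UNIV)
  have "norm (z - y) < 1"
    using z(2) order.strict_trans2[of _ "1 / (real N + 1)" 1]
    by (simp add: dist_norm norm_minus_commute)
  then have "norm z \<le> 2"
    using norm_triangle_sub[of z y] y(3) by linarith
  then have "norm z / (1 - \<delta>) * tail N \<le> 2 / (1 - \<delta>) * tail N"
    using \<delta>_less_1 sum_dev_le_tail[of "{}" N] by (intro mult_right_mono divide_right_mono) auto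
  then have "norm (z - (\<Sum>i\<in>J. a i *\<^sub>R e i)) \<le> 2 / (1 - \<delta>) * tail N"
    using norm_sum_diff_le_tail[OF J(1,2), of a] J(3) by simp
  moreover have "norm (y - (\<Sum>i\<in>J. a i *\<^sub>R e i))
      \<le> norm (y - z) + norm (z - (\<Sum>i\<in>J. a i *\<^sub>R e i))"
    by (rule norm_diff_triangle_le[of _ z]) simp_all
  ultimately show ?thesis
    using that[OF y(1,3) J(1,2), of a] z(2) by (simp add: dist_norm block_error_def)
qed

lemma exists_almost_disjoint_in:
  assumes "X \<subseteq> closure (span (range f))" "subspace X" "infinite_dimensional X"
  shows "\<exists>x. almost_disjoint_in X x"
proof -
  have "\<exists>y J a. y \<in> X \<and> norm y = 1 \<and> finite J \<and> J \<subseteq> {N..} \<and>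
      norm (y - (\<Sum>i\<in>J. a i *\<^sub>R e i)) \<le> block_error N" for N
    by (rule unit_vector_near_tail_block[OF assms]) blast
  then obtain y J a where P: "\<And>N. y N \<in> X \<and> norm (y N) = 1 \<and> finite (J N) \<and> J N \<subseteq> {N..} \<and>
      norm (y N - (\<Sum>i\<in>J N. a N i *\<^sub>R e i)) \<le> block_error N"
    by metis
  have "\<And>N. finite (J N)" "\<And>N. J N \<subseteq> {N..}"
    using P by auto
  then obtain r :: "nat \<Rightarrow> nat" where r: "strict_mono r" "disjoint_family (J \<circ> r)"
    by (rule disjoint_subseq_of_tail_sets)
  define g where "g n = (\<Sum>i\<in>J (r n). a (r n) i *\<^sub>R e i)" for n
  have "disjoint_seq g"
    unfolding disjoint_seq_def g_def
  proof (intro allI impI lat_disjoint_sums)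
    fix m n i j assume "m \<noteq> n" "i \<in> J (r m)" "j \<in> J (r n)"
    then have "i \<noteq> j"
      using r(2) unfolding disjoint_family_on_def by auto
    then show "lat_disjoint (e i) (e j)"
      using disjoint_e unfolding disjoint_seq_def by blast
  qed (use P in auto)
  have err_r: "(\<lambda>n. block_error (r n)) \<longlonglongrightarrow> 0"
    using LIMSEQ_subseq_LIMSEQ[OF block_error_tendsto_0 r(1)] by (simp add: o_def)
  have "\<forall>n. norm (g n - y (r n)) \<le> block_error (r n)"
    using P by (simp add: g_def norm_minus_commute)
  then have "(\<lambda>n. g n - (y \<circ> r) n) \<longlonglongrightarrow> 0"
    using Lim_null_comparison[OF always_eventually err_r] by simp
  then have "(\<lambda>n. norm (g n - (y \<circ> r) n)) \<longlonglongrightarrow> 0"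
    by (rule tendsto_norm_zero)
  moreover have "range (y \<circ> r) \<subseteq> unit_sphere \<inter> X"
    using P unfolding unit_sphere_def by auto
  ultimately have "almost_disjoint_in X (y \<circ> r)"
    using \<open>disjoint_seq g\<close> unfolding almost_disjoint_in_def by blast
  then show ?thesis by blast
qed

end

theorem proposition4p12:
  fixes f :: "nat \<Rightarrow> 'a::banach_lattice"
  assumes "quasi_disjoint f"
  shows "anti_dispersed (closure (span (range f)))"
proof -
  obtain e where "range e \<subseteq> unit_sphere" "disjoint_seq e"
    "summable (\<lambda>n. norm (f n - e n))" "(\<Sum>n. norm (f n - e n)) < 1"
    using assms unfolding quasi_disjoint_def by blast
  then interpret quasi_disjoint_pair f e
    by unfold_locales (auto simp: unit_sphere_def)
  show ?thesis
    unfolding anti_dispersed_def dispersed_def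
    using exists_almost_disjoint_in by (auto intro: subspace_closure subspace_span)
qed

end
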